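(* For every $\delta\in(0,\frac12]$ there exists $\alpha=\alpha(\delta)\in(0,1]$ such that $$\lambda\cdot a_1^{1+\alpha}\cdot(2-a_1x)+a_2^{1+\alpha}\cdot(2-a_2x)\le(1+\lambda)\cdot(2-x)$$ for every $x\ge\delta$ and every $\lambda,y\ge0$ with $\lambda y\le1$, where $a_1=1+y$ and $a_2=1-\lambda y$. *)

theory Defs
  imports Complex_Main
begin

end

theory Submission
  imports Defs "HOL-Analysis.Analysis"
begin

text \<open>Write \<open>\<phi>(t) = t powr (1 + \<alpha>) * (2 - t * x)\<close>. The left-hand side is
  \<open>\<lambda> * \<phi>(a\<^sub>1) + \<phi>(a\<^sub>2)\<close> and the right-hand side is \<open>(1 + \<lambda>) * \<phi>(1)\<close>, where the weighted
  mean of \<open>a\<^sub>1, a\<^sub>2\<close> with weights \<open>\<lambda>, 1\<close> is exactly \<open>1\<close>. So it suffices that \<open>\<phi>\<close> lies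
  below its tangent at \<open>1\<close> on \<open>[0, \<infinity>)\<close>. Where \<open>t * x \<ge> 2\<close> this follows from the Bernoulli
  lower bound \<open>t powr (1 + \<alpha>) \<ge> 1 + (1 + \<alpha>) * (t - 1)\<close>, elsewhere from the upper bound
  \<open>t powr \<alpha> \<le> 1 + \<alpha> * (t - 1)\<close>; the error terms have the right sign once \<open>2 * \<alpha> \<le> x\<close>,
  so \<open>\<alpha> = \<delta> / 2\<close> works.\<close>

lemma powr_le_Bernoulli:
  fixes t a :: real
  assumes "0 \<le> t" "0 \<le> a" "a \<le> 1"
  shows "t powr a \<le> 1 + a * (t - 1)"
proof (cases "t = 0")
  case False
  then show ?thesis
    using Youngs_inequality_0[of a "1 - a" t 1] assms by (simp add: algebra_simps)
qed (use assms in auto)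

lemma Bernoulli_le_powr:
  fixes t p :: real
  assumes "0 \<le> t" "1 \<le> p"
  shows "1 + p * (t - 1) \<le> t powr p"
proof (cases "t = 0")
  case False
  then have "(t powr p) powr (1 / p) * 1 powr (1 - 1 / p) \<le> t powr p / p + (1 - 1 / p)"
    using Youngs_inequality_0[of "1 / p" "1 - 1 / p" "t powr p" 1] assms by simp
  then have "t \<le> t powr p / p + (1 - 1 / p)"
    using assms by (simp add: powr_powr)
  then have "p * t \<le> p * (t powr p / p + (1 - 1 / p))"
    using assms by (intro mult_left_mono) auto
  also have "\<dots> = t powr p + p - 1"
    using assms by (simp add: field_simps)
  finally show ?thesis
    by (simp add: algebra_simps)
qed (use assms in auto)

lemma powr_mult_below_tangent_at_1:
  fixes t x a :: real
  assumes "0 \<le> t" "0 \<le> a" "a \<le> 1" "2 * a \<le> x"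
  shows "t powr (1 + a) * (2 - t * x) \<le> (2 - x) + ((1 + a) * (2 - x) - x) * (t - 1)"
proof (cases "2 \<le> t * x")
  case True
  have "t powr (1 + a) * (2 - t * x) \<le> (1 + (1 + a) * (t - 1)) * (2 - t * x)"
    using Bernoulli_le_powr[of t "1 + a"] True assms by (intro mult_right_mono_neg) auto
  also have "\<dots> = (2 - x) + ((1 + a) * (2 - x) - x) * (t - 1) - (1 + a) * x * (t - 1)\<^sup>2"
    by (simp add: algebra_simps power2_eq_square)
  also have "\<dots> \<le> (2 - x) + ((1 + a) * (2 - x) - x) * (t - 1)"
    using assms by simp
  finally show ?thesis .
next
  case False
  have "t powr (1 + a) * (2 - t * x) = t * t powr a * (2 - t * x)"
    using assms by (simp add: powr_mult_base)
  also have "\<dots> \<le> t * (1 + a * (t - 1)) * (2 - t * x)"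
    using powr_le_Bernoulli[of t a] False assms by (intro mult_right_mono mult_left_mono) auto
  also have "\<dots> = (2 - x) + ((1 + a) * (2 - x) - x) * (t - 1)
      - (t - 1)\<^sup>2 * ((x - 2 * a) + a * x * (1 + t))"
    by (simp add: algebra_simps power2_eq_square)
  also have "\<dots> \<le> (2 - x) + ((1 + a) * (2 - x) - x) * (t - 1)"
    using assms by simp
  finally show ?thesis .
qed

lemma weighted_sum_le_of_supporting_line:
  fixes f :: "real \<Rightarrow> real"
  assumes below: "\<And>t. t \<in> S \<Longrightarrow> f t \<le> f c + D * (t - c)"
    and "s \<in> S" "t \<in> S" "0 \<le> l" "l * s + t = (1 + l) * c"
  shows "l * f s + f t \<le> (1 + l) * f c"
proof -
  have "l * f s + f t \<le> l * (f c + D * (s - c)) + (f c + D * (t - c))"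
    using below assms by (intro add_mono mult_left_mono) auto
  also have "\<dots> = (1 + l) * f c + D * (l * s + t - (1 + l) * c)"
    by (simp add: algebra_simps)
  finally show ?thesis
    using assms by simp
qed

theorem lemma2p21:
  fixes \<delta> :: real
  assumes "0 < \<delta>" and "\<delta> \<le> 1/2"
  shows "\<exists>\<alpha>::real. 0 < \<alpha> \<and> \<alpha> \<le> 1 \<and>
    (\<forall>x l y :: real. x \<ge> \<delta> \<longrightarrow> l \<ge> 0 \<longrightarrow> y \<ge> 0 \<longrightarrow> l * y \<le> 1 \<longrightarrow>
      l * (1 + y) powr (1 + \<alpha>) * (2 - (1 + y) * x)
        + (1 - l * y) powr (1 + \<alpha>) * (2 - (1 - l * y) * x)
      \<le> (1 + l) * (2 - x))"
proof (intro exI conjI allI impI)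
  show "0 < \<delta> / 2" "\<delta> / 2 \<le> 1"
    using assms by auto
  fix x l y :: real
  assume "x \<ge> \<delta>" "l \<ge> 0" "y \<ge> 0" "l * y \<le> 1"
  let ?\<phi> = "\<lambda>t. t powr (1 + \<delta> / 2) * (2 - t * x)"
  have "l * ?\<phi> (1 + y) + ?\<phi> (1 - l * y) \<le> (1 + l) * ?\<phi> 1"
  proof (rule weighted_sum_le_of_supporting_line[where f = ?\<phi> and S = "{0..}" and c = 1])
    show "?\<phi> t \<le> ?\<phi> 1 + ((1 + \<delta> / 2) * (2 - x) - x) * (t - 1)" if "t \<in> {0..}" for t
      using powr_mult_below_tangent_at_1[of t "\<delta> / 2" x] that assms \<open>x \<ge> \<delta>\<close> by simp
  qed (use \<open>l \<ge> 0\<close> \<open>y \<ge> 0\<close> \<open>l * y \<le> 1\<close> in \<open>auto simp: algebra_simps\<close>)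
  then show "l * (1 + y) powr (1 + \<delta> / 2) * (2 - (1 + y) * x)
      + (1 - l * y) powr (1 + \<delta> / 2) * (2 - (1 - l * y) * x) \<le> (1 + l) * (2 - x)"
    by (simp add: mult.assoc)
qed

end
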